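(* For every bounded continuous $f:\mathbb{R}^d\to\mathbb{C}$ and every $\epsilon>0$ there exists $n_0\ge1$ such that for every sequence $\{(R_n,B_n)\}_{n=1}^\infty\subseteq\mathcal{D}_d$, $$\Big|\int f\,d\mu_{n_0}-\int f\,d\mu\Big|<\epsilon,$$ where $\mu_n=\delta_{R_1^{-1}B_1}*\delta_{(R_2R_1)^{-1}B_2}*\cdots*\delta_{(R_n\cdots R_1)^{-1}B_n}$ and $\mu$ is the weak limit of $\mu_n$.
   Context: $\mathcal{D}_d$ is the set of pairs $(R,B)$ with $R=\mathrm{diag}(m_1,\dots,m_d)$, $m_1,\dots,m_d\ge2$ integers, and $B$ a nonempty subset of $\{0,\dots,m_1-1\}\times\cdots\times\{0,\dots,m_d-1\}$. For finite $A$, $\delta_A=\frac{1}{\#A}\sum_{a\in A}\delta_a$. For every sequence in $\mathcal{D}_d$ the measures $\mu_n$ converge weakly to a Borel probability measure $\mu$ (the infinite convolution). *)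

theory Defs
  imports "HOL-Analysis.Analysis" "HOL-Probability.Probability"
begin

text \<open>A pair (R,B) in D_d: R = diag(m_1,...,m_d) is represented by its diagonal
  m :: 'd => nat, the digit set B by a set of integer vectors 'd => nat.\<close>
definition in_D :: "('d::finite \<Rightarrow> nat) \<Rightarrow> ('d \<Rightarrow> nat) set \<Rightarrow> bool" where
  "in_D m B \<longleftrightarrow> (\<forall>i. m i \<ge> 2) \<and> B \<noteq> {} \<and> B \<subseteq> {b. \<forall>i. b i < m i}"

definition delta :: "'a set \<Rightarrow> 'a pmf" where
  "delta A = pmf_of_set A"

definition conv_pmf :: "('a::monoid_add) pmf \<Rightarrow> 'a pmf \<Rightarrow> 'a pmf" where
  "conv_pmf p q = map_pmf (\<lambda>(x, y). x + y) (pair_pmf p q)"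

definition scaled_digits ::
  "(nat \<Rightarrow> 'd::finite \<Rightarrow> nat) \<Rightarrow> (nat \<Rightarrow> ('d \<Rightarrow> nat) set) \<Rightarrow> nat \<Rightarrow> (real^'d) set" where
  "scaled_digits m B k =
     (\<lambda>b. \<chi> i. real (b i) / (\<Prod>j\<in>{1..k}. real (m j i))) ` B k"

fun mu_pmf ::
  "(nat \<Rightarrow> 'd::finite \<Rightarrow> nat) \<Rightarrow> (nat \<Rightarrow> ('d \<Rightarrow> nat) set) \<Rightarrow> nat \<Rightarrow> (real^'d) pmf" where
  "mu_pmf m B 0 = return_pmf 0"
| "mu_pmf m B (Suc n) = conv_pmf (mu_pmf m B n) (delta (scaled_digits m B (Suc n)))"

definition weak_conv_meas :: "(nat \<Rightarrow> 'a::metric_space measure) \<Rightarrow> 'a measure \<Rightarrow> bool" where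
  "weak_conv_meas M L \<longleftrightarrow>
     (\<forall>g :: 'a \<Rightarrow> real. continuous_on UNIV g \<and> bounded (range g) \<longrightarrow>
        (\<lambda>n. integral\<^sup>L (M n) g) \<longlonglongrightarrow> integral\<^sup>L L g)"

end

theory Submission imports Defs begin

text \<open>For n \<le> p, mu_p is mu_n convolved with the law of the tail
  sum_{n<k\<le>p} (R_k...R_1)^{-1} b_k. Since 0 \<le> b_k \<le> m_k - 1 componentwise, the tail
  telescopes into the box [0, (R_n...R_1)^{-1} 1] \<subseteq> [0, 2^{-n}]^d, and every mu_p lives on the
  unit cube. Uniform continuity of f on the unit cube therefore bounds
  |\<integral>f d mu_p - \<integral>f d mu_n| for all p \<ge> n \<ge> n0, uniformly in the sequence (R_k, B_k);
  letting p \<rightarrow> \<infinity> and applying weak convergence to Re f and Im f gives the bound for mu.\<close>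

lemma conv_pmf_assoc:
  fixes p q r :: "'a::monoid_add pmf"
  shows "conv_pmf (conv_pmf p q) r = conv_pmf p (conv_pmf q r)"
  by (simp add: conv_pmf_def pair_pmf_def map_pmf_def bind_assoc_pmf bind_return_pmf add.assoc)

lemma conv_pmf_return_zero_left: "conv_pmf (return_pmf 0) q = (q :: 'a::monoid_add pmf)"
  by (simp add: conv_pmf_def pair_return_pmf1 pmf.map_comp o_def)

lemma conv_pmf_return_zero_right: "conv_pmf p (return_pmf 0) = (p :: 'a::monoid_add pmf)"
  by (simp add: conv_pmf_def pair_return_pmf2 pmf.map_comp o_def)

lemma set_pmf_conv_pmf: "set_pmf (conv_pmf p q) = {x + y |x y. x \<in> set_pmf p \<and> y \<in> set_pmf q}"
  by (auto simp: conv_pmf_def)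

lemma integrable_measure_pmf_bounded:
  fixes f :: "'a \<Rightarrow> 'b::{banach, second_countable_topology}"
  assumes "bounded (range f)"
  shows "integrable (measure_pmf p) f"
proof -
  obtain C where "\<And>x. norm (f x) \<le> C" using assms by (auto simp: bounded_iff)
  then show ?thesis by (intro measure_pmf.integrable_const_bound[where B = C]) auto
qed

lemma norm_integral_conv_pmf_diff_le:
  fixes f :: "'a::monoid_add \<Rightarrow> 'b::{banach, second_countable_topology}"
  assumes bounded: "bounded (range f)"
    and close: "\<And>x y. x \<in> set_pmf p \<Longrightarrow> y \<in> set_pmf q \<Longrightarrow> norm (f (x + y) - f x) \<le> e"
  shows "norm ((\<integral>z. f z \<partial>measure_pmf (conv_pmf p q)) - (\<integral>x. f x \<partial>measure_pmf p)) \<le> e"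
proof -
  let ?P = "measure_pmf (pair_pmf p q)"
  have bounded_shift: "bounded (range (\<lambda>z. f (fst z + snd z)))" and bounded_fst: "bounded (range (\<lambda>z. f (fst z)))"
    using bounded by (auto intro: bounded_subset)
  have conv: "(\<integral>z. f z \<partial>measure_pmf (conv_pmf p q)) = (\<integral>z. f (fst z + snd z) \<partial>?P)"
    by (simp add: conv_pmf_def integral_map_pmf case_prod_beta)
  have marginal: "(\<integral>x. f x \<partial>measure_pmf p) = (\<integral>z. f (fst z) \<partial>?P)"
    by (subst map_fst_pair_pmf[symmetric, of _ q]) (simp only: integral_map_pmf)
  have "(\<integral>z. f z \<partial>measure_pmf (conv_pmf p q)) - (\<integral>x. f x \<partial>measure_pmf p)
      = (\<integral>z. f (fst z + snd z) - f (fst z) \<partial>?P)"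
    unfolding conv marginal using bounded_shift bounded_fst
    by (intro Bochner_Integration.integral_diff[symmetric] integrable_measure_pmf_bounded)
  also have "norm \<dots> \<le> (\<integral>z. norm (f (fst z + snd z) - f (fst z)) \<partial>?P)"
    by (rule integral_norm_bound)
  also have "\<dots> \<le> e"
  proof (rule measure_pmf.integral_le_const)
    show "integrable ?P (\<lambda>z. norm (f (fst z + snd z) - f (fst z)))"
      using bounded_shift bounded_fst
      by (intro integrable_norm Bochner_Integration.integrable_diff integrable_measure_pmf_bounded)
    show "AE z in ?P. norm (f (fst z + snd z) - f (fst z)) \<le> e"
      by (rule AE_pmfI) (auto intro: close)
  qed
  finally show ?thesis .
qed

definition diag_prod :: "(nat \<Rightarrow> 'd \<Rightarrow> nat) \<Rightarrow> nat \<Rightarrow> 'd \<Rightarrow> real" where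
  "diag_prod m n i = (\<Prod>j\<in>{1..n}. real (m j i))"

lemma diag_prod_0 [simp]: "diag_prod m 0 i = 1"
  by (simp add: diag_prod_def)

lemma diag_prod_Suc: "diag_prod m (Suc n) i = diag_prod m n i * real (m (Suc n) i)"
  by (simp add: diag_prod_def prod.nat_ivl_Suc' mult.commute)

lemma diag_prod_ge_pow2:
  assumes "\<forall>j\<ge>1. 2 \<le> m j i"
  shows "2 ^ n \<le> diag_prod m n i"
proof -
  have "(\<Prod>j\<in>{1..n}. (2::real)) \<le> diag_prod m n i"
    unfolding diag_prod_def by (rule prod_mono) (use assms in auto)
  then show ?thesis by simp
qed

lemma in_D_diag_prod_pos:
  assumes "\<forall>k\<ge>1. in_D (m k) (B k)"
  shows "0 < diag_prod m n i"
proof -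
  have "2 ^ n \<le> diag_prod m n i"
    using assms by (intro diag_prod_ge_pow2) (auto simp: in_D_def)
  then show ?thesis by (smt (verit) zero_less_power)
qed

lemma scaled_digits_eq: "scaled_digits m B k = (\<lambda>b. \<chi> i. real (b i) / diag_prod m k i) ` B k"
  by (simp add: scaled_digits_def diag_prod_def)

lemma in_D_finite:
  assumes "in_D m B"
  shows "finite B"
proof (rule finite_subset)
  show "B \<subseteq> PiE UNIV (\<lambda>i. {..<m i})"
    using assms by (auto simp: in_D_def PiE_def extensional_def)
qed (intro finite_PiE, auto)

lemma set_pmf_delta_scaled_digits:
  assumes "in_D (m k) (B k)"
  shows "set_pmf (delta (scaled_digits m B k)) = scaled_digits m B k"
  using assms in_D_finite[OF assms] by (simp add: delta_def scaled_digits_def in_D_def)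

lemma scaled_digit_bounds:
  assumes "in_D (m (Suc p)) (B (Suc p))" and "0 < diag_prod m p i" and "b \<in> B (Suc p)"
  shows "0 \<le> real (b i) / diag_prod m (Suc p) i"
    and "real (b i) / diag_prod m (Suc p) i \<le> 1 / diag_prod m p i - 1 / diag_prod m (Suc p) i"
proof -
  have "b i < m (Suc p) i" and m: "2 \<le> real (m (Suc p) i)"
    using assms(1,3) by (auto simp: in_D_def)
  then have b: "real (b i) \<le> real (m (Suc p) i) - 1"
    by linarith
  then show "0 \<le> real (b i) / diag_prod m (Suc p) i"
    using assms(2) by (simp add: diag_prod_Suc)
  have "real (b i) / diag_prod m (Suc p) i \<le> (real (m (Suc p) i) - 1) / diag_prod m (Suc p) i"
    using b m assms(2) by (intro divide_right_mono) (auto simp: diag_prod_Suc)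
  also have "\<dots> = 1 / diag_prod m p i - 1 / diag_prod m (Suc p) i"
    using m assms(2) by (simp add: diag_prod_Suc field_simps)
  finally show "real (b i) / diag_prod m (Suc p) i \<le> 1 / diag_prod m p i - 1 / diag_prod m (Suc p) i" .
qed

lemma mu_pmf_split:
  assumes D: "\<forall>k\<ge>1. in_D (m k) (B k)" and "n \<le> p"
  shows "\<exists>T. mu_pmf m B p = conv_pmf (mu_pmf m B n) T \<and>
     (\<forall>y\<in>set_pmf T. \<forall>i. 0 \<le> y$i \<and> y$i \<le> 1 / diag_prod m n i - 1 / diag_prod m p i)"
  using \<open>n \<le> p\<close>
proof (induction p rule: dec_induct)
  case base
  show ?case by (intro exI[of _ "return_pmf 0"]) (simp add: conv_pmf_return_zero_right)
next
  case (step p)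
  then obtain T where split: "mu_pmf m B p = conv_pmf (mu_pmf m B n) T"
    and T: "\<forall>y\<in>set_pmf T. \<forall>i. 0 \<le> y$i \<and> y$i \<le> 1 / diag_prod m n i - 1 / diag_prod m p i"
    by blast
  let ?S = "delta (scaled_digits m B (Suc p))"
  have inD: "in_D (m (Suc p)) (B (Suc p))" using D by simp
  show ?case
  proof (intro exI conjI ballI allI)
    show "mu_pmf m B (Suc p) = conv_pmf (mu_pmf m B n) (conv_pmf T ?S)"
      by (simp add: split conv_pmf_assoc)
  next
    fix z i assume "z \<in> set_pmf (conv_pmf T ?S)"
    then obtain y b where y: "y \<in> set_pmf T" and b: "b \<in> B (Suc p)"
      and z: "z = y + (\<chi> i. real (b i) / diag_prod m (Suc p) i)"
      unfolding set_pmf_conv_pmf set_pmf_delta_scaled_digits[where m = m and B = B and k = "Suc p", OF inD]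
      by (auto simp: scaled_digits_eq)
    note digit = scaled_digit_bounds[of m p B i b, OF inD in_D_diag_prod_pos[OF D] b]
    have "0 \<le> y$i \<and> y$i \<le> 1 / diag_prod m n i - 1 / diag_prod m p i"
      using T y by blast
    then show "0 \<le> z$i" "z$i \<le> 1 / diag_prod m n i - 1 / diag_prod m (Suc p) i"
      using digit z by auto
  qed
qed

lemma set_pmf_mu_pmf_subset_unit_cube:
  assumes D: "\<forall>k\<ge>1. in_D (m k) (B k)"
  shows "set_pmf (mu_pmf m B p) \<subseteq> cbox 0 1"
proof
  fix x assume x: "x \<in> set_pmf (mu_pmf m B p)"
  obtain T where "mu_pmf m B p = T"
    and T: "\<forall>y\<in>set_pmf T. \<forall>i. 0 \<le> y$i \<and> y$i \<le> 1 - 1 / diag_prod m p i"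
    using mu_pmf_split[OF D, of 0 p] by (auto simp: conv_pmf_return_zero_left)
  have "0 \<le> x$i \<and> x$i \<le> 1" for i
    using T x \<open>mu_pmf m B p = T\<close> in_D_diag_prod_pos[OF D, of p i]
    by (smt (verit) divide_pos_pos)
  then show "x \<in> cbox 0 1"
    by (simp add: mem_box_cart)
qed

lemma mu_pmf_split_small:
  fixes m :: "nat \<Rightarrow> 'd::finite \<Rightarrow> nat"
  assumes D: "\<forall>k\<ge>1. in_D (m k) (B k)" and "n \<le> p"
  shows "\<exists>T. mu_pmf m B p = conv_pmf (mu_pmf m B n) T \<and>
     (\<forall>y\<in>set_pmf T. norm y \<le> real CARD('d) / 2 ^ n)"
proof -
  obtain T where split: "mu_pmf m B p = conv_pmf (mu_pmf m B n) T"
    and T: "\<forall>y\<in>set_pmf T. \<forall>i. 0 \<le> y$i \<and> y$i \<le> 1 / diag_prod m n i - 1 / diag_prod m p i"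
    using mu_pmf_split[OF assms] by blast
  have "norm y \<le> real CARD('d) / 2 ^ n" if y: "y \<in> set_pmf T" for y
  proof -
    have "\<bar>y$i\<bar> \<le> 1 / 2 ^ n" for i
    proof -
      have "2 ^ n \<le> diag_prod m n i"
        using D by (intro diag_prod_ge_pow2) (auto simp: in_D_def)
      then have "1 / diag_prod m n i \<le> 1 / 2 ^ n"
        by (simp add: frac_le)
      then show ?thesis
        using T y in_D_diag_prod_pos[OF D, of p i] by (smt (verit) divide_pos_pos)
    qed
    then have "(\<Sum>i\<in>UNIV. \<bar>y$i\<bar>) \<le> (\<Sum>i\<in>(UNIV::'d set). 1 / 2 ^ n)"
      by (intro sum_mono)
    then show ?thesis
      using norm_le_l1_cart[of y] by simp
  qed
  with split show ?thesis by blast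
qed

lemma mu_pmf_integral_uniformly_Cauchy:
  fixes f :: "real^'d::finite \<Rightarrow> 'b::{banach, second_countable_topology}"
  assumes cont: "continuous_on (cbox 0 1) f" and bounded: "bounded (range f)" and "0 < e"
  obtains n0 where "1 \<le> n0"
    and "\<And>m B n p. \<forall>k\<ge>1. in_D (m k) (B k) \<Longrightarrow> n0 \<le> n \<Longrightarrow> n \<le> p \<Longrightarrow>
      norm ((\<integral>x. f x \<partial>measure_pmf (mu_pmf m B p)) - (\<integral>x. f x \<partial>measure_pmf (mu_pmf m B n))) \<le> e"
proof -
  have "uniformly_continuous_on (cbox 0 1) f"
    using cont by (intro compact_uniformly_continuous) auto
  then obtain \<delta> where "0 < \<delta>"
    and unif: "\<And>x x'. x \<in> cbox 0 1 \<Longrightarrow> x' \<in> cbox 0 1 \<Longrightarrow> dist x' x < \<delta> \<Longrightarrow> dist (f x') (f x) < e"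
    using \<open>0 < e\<close> unfolding uniformly_continuous_on_def by meson
  have "\<forall>\<^sub>F n in sequentially. real CARD('d) / 2 ^ n < \<delta> \<and> 1 \<le> n"
    using order_tendstoD(2)[OF LIMSEQ_divide_realpow_zero[of 2 "real CARD('d)"] \<open>0 < \<delta>\<close>]
    by (intro eventually_conj eventually_ge_at_top) simp_all
  then obtain n0 where n0: "\<And>n. n0 \<le> n \<Longrightarrow> real CARD('d) / 2 ^ n < \<delta> \<and> 1 \<le> n"
    unfolding eventually_sequentially by blast
  show ?thesis
  proof (rule that)
    show "1 \<le> n0" using n0 by blast
  next
    fix m :: "nat \<Rightarrow> 'd \<Rightarrow> nat" and B n p
    assume D: "\<forall>k\<ge>1. in_D (m k) (B k)" and "n0 \<le> n" "n \<le> p"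
    obtain T where split: "mu_pmf m B p = conv_pmf (mu_pmf m B n) T"
      and small: "\<forall>y\<in>set_pmf T. norm y \<le> real CARD('d) / 2 ^ n"
      using mu_pmf_split_small[OF D \<open>n \<le> p\<close>] by blast
    have "norm (f (x + y) - f x) \<le> e" if x: "x \<in> set_pmf (mu_pmf m B n)" and y: "y \<in> set_pmf T" for x y
    proof -
      have "x + y \<in> set_pmf (mu_pmf m B p)"
        using x y unfolding split set_pmf_conv_pmf by blast
      moreover have "norm y \<le> real CARD('d) / 2 ^ n"
        using small y by blast
      then have "dist (x + y) x < \<delta>"
        using n0[OF \<open>n0 \<le> n\<close>] by (simp add: dist_norm)
      ultimately have "dist (f (x + y)) (f x) < e"
        using x set_pmf_mu_pmf_subset_unit_cube[OF D] by (intro unif) auto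
      then show ?thesis by (simp add: dist_norm)
    qed
    then show "norm ((\<integral>x. f x \<partial>measure_pmf (mu_pmf m B p)) - (\<integral>x. f x \<partial>measure_pmf (mu_pmf m B n))) \<le> e"
      unfolding split using bounded by (intro norm_integral_conv_pmf_diff_le)
  qed
qed

lemma weak_conv_meas_complex:
  fixes f :: "'a::metric_space \<Rightarrow> complex"
  assumes weak: "weak_conv_meas M L" and cont: "continuous_on UNIV f" and bounded: "bounded (range f)"
    and "\<And>n. integrable (M n) f" and "integrable L f"
  shows "(\<lambda>n. \<integral>x. f x \<partial>M n) \<longlonglongrightarrow> (\<integral>x. f x \<partial>L)"
proof -
  have integral_eq: "(\<integral>x. f x \<partial>N) = Complex (\<integral>x. Re (f x) \<partial>N) (\<integral>x. Im (f x) \<partial>N)"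
    if "integrable N f" for N
    using that by (simp add: complex_eq_iff)
  have "continuous_on UNIV (\<lambda>x. Re (f x))" "continuous_on UNIV (\<lambda>x. Im (f x))"
    using cont by (auto intro: continuous_intros)
  moreover have "bounded (range (\<lambda>x. Re (f x)))" "bounded (range (\<lambda>x. Im (f x)))"
    using bounded by (auto simp: bounded_iff intro: abs_Re_le_cmod[THEN order_trans] abs_Im_le_cmod[THEN order_trans])
  ultimately have "(\<lambda>n. Complex (\<integral>x. Re (f x) \<partial>M n) (\<integral>x. Im (f x) \<partial>M n))
      \<longlonglongrightarrow> Complex (\<integral>x. Re (f x) \<partial>L) (\<integral>x. Im (f x) \<partial>L)"
    by (intro tendsto_Complex weak[unfolded weak_conv_meas_def, rule_format] conjI)
  then show ?thesis
    unfolding integral_eq[OF assms(5)] integral_eq[OF assms(4)] .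
qed

lemma integrable_prob_space_bounded_continuous:
  fixes f :: "'a::topological_space \<Rightarrow> 'b::{banach, second_countable_topology}"
  assumes "prob_space M" and "sets M = sets borel"
    and "continuous_on UNIV f" and "bounded (range f)"
  shows "integrable M f"
proof -
  have "f \<in> borel_measurable M"
    using borel_measurable_continuous_onI[OF assms(3)] measurable_cong_sets[OF assms(2) refl] by blast
  moreover obtain C where "\<And>x. norm (f x) \<le> C"
    using assms(4) by (auto simp: bounded_iff)
  ultimately show ?thesis
    using prob_space.finite_measure[OF assms(1)]
    by (intro finite_measure.integrable_const_bound[where B = C]) auto
qed

lemma LIMSEQ_norm_diff_le:
  fixes X :: "nat \<Rightarrow> 'a::real_normed_vector"
  assumes "X \<longlonglongrightarrow> L" and "\<And>p. n \<le> p \<Longrightarrow> norm (X p - X n) \<le> e"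
  shows "norm (L - X n) \<le> e"
proof (rule LIMSEQ_le_const2)
  show "(\<lambda>p. norm (X p - X n)) \<longlonglongrightarrow> norm (L - X n)"
    using assms(1) by (intro tendsto_intros)
qed (use assms(2) in auto)

theorem lemma5p5:
  fixes f :: "real^'d \<Rightarrow> complex" and \<epsilon> :: real
  assumes "continuous_on UNIV f" and "bounded (range f)" and "\<epsilon> > 0"
  shows "\<exists>n0\<ge>1. \<forall>(m :: nat \<Rightarrow> 'd \<Rightarrow> nat) (B :: nat \<Rightarrow> ('d \<Rightarrow> nat) set) (\<mu> :: (real^'d) measure).
           (\<forall>n\<ge>1. in_D (m n) (B n)) \<and> prob_space \<mu> \<and> sets \<mu> = sets borel \<and>
           weak_conv_meas (\<lambda>n. measure_pmf (mu_pmf m B n)) \<mu> \<longrightarrow>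
           cmod ((\<integral>x. f x \<partial>measure_pmf (mu_pmf m B n0)) - (\<integral>x. f x \<partial>\<mu>)) < \<epsilon>"
proof -
  obtain n0 where "1 \<le> n0" and Cauchy: "\<And>m B p. \<forall>k\<ge>1. in_D (m k) (B k) \<Longrightarrow> n0 \<le> p \<Longrightarrow>
      norm ((\<integral>x. f x \<partial>measure_pmf (mu_pmf m B p)) - (\<integral>x. f x \<partial>measure_pmf (mu_pmf m B n0))) \<le> \<epsilon> / 2"
  proof (rule mu_pmf_integral_uniformly_Cauchy[of f "\<epsilon> / 2"])
    show "continuous_on (cbox 0 1) f"
      using assms(1) by (rule continuous_on_subset) simp
  qed (use assms(2,3) in auto)
  show ?thesis
  proof (intro exI[of _ n0] conjI allI impI)
    fix m :: "nat \<Rightarrow> 'd \<Rightarrow> nat" and B \<mu>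
    assume "(\<forall>n\<ge>1. in_D (m n) (B n)) \<and> prob_space \<mu> \<and> sets \<mu> = sets borel \<and>
      weak_conv_meas (\<lambda>n. measure_pmf (mu_pmf m B n)) \<mu>"
    then have D: "\<forall>n\<ge>1. in_D (m n) (B n)" and "prob_space \<mu>" and "sets \<mu> = sets borel"
      and weak: "weak_conv_meas (\<lambda>n. measure_pmf (mu_pmf m B n)) \<mu>" by auto
    have "(\<lambda>p. \<integral>x. f x \<partial>measure_pmf (mu_pmf m B p)) \<longlonglongrightarrow> (\<integral>x. f x \<partial>\<mu>)"
      using assms(1,2) integrable_prob_space_bounded_continuous[OF \<open>prob_space \<mu>\<close> \<open>sets \<mu> = sets borel\<close>]
      by (intro weak_conv_meas_complex[OF weak] integrable_measure_pmf_bounded)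
    then have "norm ((\<integral>x. f x \<partial>\<mu>) - (\<integral>x. f x \<partial>measure_pmf (mu_pmf m B n0))) \<le> \<epsilon> / 2"
      by (rule LIMSEQ_norm_diff_le) (use Cauchy[OF D] in auto)
    then show "cmod ((\<integral>x. f x \<partial>measure_pmf (mu_pmf m B n0)) - (\<integral>x. f x \<partial>\<mu>)) < \<epsilon>"
      using \<open>0 < \<epsilon>\<close> by (simp add: norm_minus_commute)
  qed (fact \<open>1 \<le> n0\<close>)
qed

end
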